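(* Let $f : 2^V \to \mathbb{Z}_{\ge 0}$ be a connectivity function. If $W \subseteq V$ is a set with $f(W) > 2\,\mathtt{bw}(f)$, then there exists a tripartition $(C_1,C_2,C_3)$ of $V$ (parts may be empty) such that for each $i\in\{1,2,3\}$: $f(C_i) < f(W)/2$, $f(C_i\cap W) < f(W)$, and $f(C_i \cap (V\setminus W)) < f(W)$.
   Context: $V$ is a finite set. A function $f:2^V\to\mathbb{Z}_{\ge 0}$ is a connectivity function if $f(\emptyset)=0$, $f(X)=f(V\setminus X)$ for all $X\subseteq V$, and $f(X\cup Y)+f(X\cap Y)\le f(X)+f(Y)$ for all $X,Y\subseteq V$. A branch decomposition of $f$ is a pair $(T,L)$ where $T$ is a tree whose nodes have degree 1 or 3 and $L$ is a bijection from $V$ to the leaves of $T$ (such exist only when $|V|\ge 2$). Each edge $e$ of $T$ induces, via the components of $T-e$, a bipartition $(X,V\setminus X)$ of $V$, and its width is $f(X)$. The width of $(T,L)$ is the maximum edge width, and $\mathtt{bw}(f)$, the branchwidth of $f$, is the minimum width of a branch decomposition of $f$. A tripartition of $V$ is an ordered triple of pairwise disjoint sets (possibly empty) whose union is $V$. *)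

theory Defs
  imports Main
begin

definition connectivity_function :: "'a set \<Rightarrow> ('a set \<Rightarrow> nat) \<Rightarrow> bool" where
  "connectivity_function V f \<longleftrightarrow>
     f {} = 0 \<and>
     (\<forall>X. X \<subseteq> V \<longrightarrow> f X = f (V - X)) \<and>
     (\<forall>X Y. X \<subseteq> V \<longrightarrow> Y \<subseteq> V \<longrightarrow> f (X \<union> Y) + f (X \<inter> Y) \<le> f X + f Y)"

definition adj :: "nat set set \<Rightarrow> (nat \<times> nat) set" where
  "adj E = {(u, v). {u, v} \<in> E}"

definition is_tree :: "nat set \<Rightarrow> nat set set \<Rightarrow> bool" where
  "is_tree N E \<longleftrightarrow>
     finite N \<and> N \<noteq> {} \<and>
     (\<forall>e\<in>E. \<exists>u v. e = {u, v} \<and> u \<noteq> v \<and> u \<in> N \<and> v \<in> N) \<and>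
     (\<forall>u\<in>N. \<forall>v\<in>N. (u, v) \<in> (adj E)\<^sup>*) \<and>
     (\<forall>u v. {u, v} \<in> E \<longrightarrow> (u, v) \<notin> (adj (E - {{u, v}}))\<^sup>*)"

definition degree :: "nat set set \<Rightarrow> nat \<Rightarrow> nat" where
  "degree E v = card {e \<in> E. v \<in> e}"

definition leaves :: "nat set \<Rightarrow> nat set set \<Rightarrow> nat set" where
  "leaves N E = {v \<in> N. degree E v = 1}"

definition branch_decomposition :: "'a set \<Rightarrow> nat set \<Rightarrow> nat set set \<Rightarrow> ('a \<Rightarrow> nat) \<Rightarrow> bool" where
  "branch_decomposition V N E L \<longleftrightarrow>
     is_tree N E \<and> (\<forall>v\<in>N. degree E v = 1 \<or> degree E v = 3) \<and> bij_betw L V (leaves N E)"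

definition edge_side :: "'a set \<Rightarrow> nat set set \<Rightarrow> ('a \<Rightarrow> nat) \<Rightarrow> nat \<Rightarrow> nat \<Rightarrow> 'a set" where
  "edge_side V E L u v = {x \<in> V. (u, L x) \<in> (adj (E - {{u, v}}))\<^sup>*}"

definition bd_width :: "'a set \<Rightarrow> ('a set \<Rightarrow> nat) \<Rightarrow> nat set set \<Rightarrow> ('a \<Rightarrow> nat) \<Rightarrow> nat" where
  "bd_width V f E L = Max ({f (edge_side V E L u v) | u v. {u, v} \<in> E} \<union> {0})"

text \<open>Branchwidth; by convention 0 when |V| < 2 (no branch decomposition exists then).\<close>
definition bw :: "'a set \<Rightarrow> ('a set \<Rightarrow> nat) \<Rightarrow> nat" where
  "bw V f = (if 2 \<le> card V
             then (LEAST k. \<exists>N E L. branch_decomposition V N E L \<and> bd_width V f E L = k)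
             else 0)"

end

theory Submission
  imports Defs
begin

(*
  Fix a branch decomposition of width bw(f). Every tree edge displays a separation (A, V - A)
  with 2 f(A) < f(W), and submodularity shows that at least one of A and V - A meets both W
  and V - W in sets of connectivity less than f(W); call such a side good. Sides at leaves are
  singletons and hence good. If every side is good, the two sides of any edge together with the
  empty set are the required tripartition. Otherwise take a bad side spanning as few tree nodes
  as possible: it is the branch at an inner node u away from a neighbour v; the branches at u
  away from its two other neighbours are smaller, hence good, and the branch at v away from u
  is good because its complement is bad. These three branches partition V.
  The decomposition of width bw(f) exists because some branch decomposition does (a caterpillar)
  once |V| >= 2; for smaller V we have f(W) = 0.
*)

lemma sym_adj: "sym (adj F)"
  by (auto simp: sym_def adj_def insert_commute)

lemma adj_rtrancl_sym: "(x, y) \<in> (adj F)\<^sup>* \<Longrightarrow> (y, x) \<in> (adj F)\<^sup>*"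
  using sym_rtrancl[OF sym_adj] by (auto simp: sym_def)

lemma adj_rtrancl_mono: "F \<subseteq> G \<Longrightarrow> (adj F)\<^sup>* \<subseteq> (adj G)\<^sup>*"
  by (rule rtrancl_mono) (auto simp: adj_def)

lemma adj_rtrancl_closed:
  assumes "(u, z) \<in> (adj F)\<^sup>*" "u \<in> S" "\<And>x y. {x, y} \<in> F \<Longrightarrow> x \<in> S \<Longrightarrow> y \<in> S"
  shows "z \<in> S"
  using assms(1) by induction (use assms(2,3) in \<open>auto simp: adj_def\<close>)

lemma adj_rtrancl_separated:
  assumes "u \<in> S" "w \<notin> S" "\<And>x y. {x, y} \<in> F \<Longrightarrow> x \<in> S \<longleftrightarrow> y \<in> S"
  shows "(u, w) \<notin> (adj F)\<^sup>*"
  using adj_rtrancl_closed[of u w F S] assms by blast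

lemma adj_rtrancl_Diff_unreachable:
  assumes "(a, z) \<in> (adj F)\<^sup>*" "(a, u) \<notin> (adj F)\<^sup>*" "u \<in> e"
  shows "(a, z) \<in> (adj (F - {e}))\<^sup>*"
  using assms(1)
proof (induction rule: rtrancl_induct)
  case (step y z)
  have "{y, z} \<noteq> e"
  proof
    assume "{y, z} = e"
    then have "u = y \<or> u = z" using assms(3) by auto
    then show False using step.hyps assms(2) by (auto intro: rtrancl_into_rtrancl)
  qed
  then have "(y, z) \<in> adj (F - {e})" using step.hyps(2) by (simp add: adj_def)
  then show ?case by (rule rtrancl_into_rtrancl[OF step.IH])
qed simp

lemma is_tree_edgeD: "is_tree N E \<Longrightarrow> {u, v} \<in> E \<Longrightarrow> u \<in> N \<and> v \<in> N \<and> u \<noteq> v"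
  unfolding is_tree_def by (metis doubleton_eq_iff)

lemma is_tree_edge_at:
  assumes "is_tree N E" "e \<in> E" "u \<in> e"
  obtains w where "e = {u, w}"
  using assms unfolding is_tree_def by (metis insertE insert_commute singletonD)

lemma is_tree_bridge: "is_tree N E \<Longrightarrow> {u, v} \<in> E \<Longrightarrow> (u, v) \<notin> (adj (E - {{u, v}}))\<^sup>*"
  unfolding is_tree_def by blast

lemma is_tree_finite: "is_tree N E \<Longrightarrow> finite N"
  unfolding is_tree_def by blast

lemma is_tree_connected: "is_tree N E \<Longrightarrow> u \<in> N \<Longrightarrow> v \<in> N \<Longrightarrow> (u, v) \<in> (adj E)\<^sup>*"
  unfolding is_tree_def by blast

section \<open>Branches of a tree at an edge\<close>

definition edge_component :: "nat set set \<Rightarrow> nat \<Rightarrow> nat \<Rightarrow> nat set" where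
  "edge_component E u v = {z. (u, z) \<in> (adj (E - {{u, v}}))\<^sup>*}"

lemma edge_side_eq: "edge_side V E L u v = {x \<in> V. L x \<in> edge_component E u v}"
  by (simp add: edge_side_def edge_component_def)

lemma edge_component_self [simp]: "u \<in> edge_component E u v"
  by (simp add: edge_component_def)

lemma edge_component_step:
  assumes "y \<in> edge_component E p q" "{y, z} \<in> E"
  shows "z = p \<or> z = q \<or> z \<in> edge_component E p q"
proof (cases "{y, z} = {p, q}")
  case False
  then have "(y, z) \<in> adj (E - {{p, q}})" using assms(2) by (simp add: adj_def)
  with assms(1) have "(p, z) \<in> (adj (E - {{p, q}}))\<^sup>*"
    unfolding edge_component_def by (simp add: rtrancl_into_rtrancl)
  then show ?thesis by (simp add: edge_component_def)
qed (auto simp: doubleton_eq_iff)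

lemma edge_component_subset:
  assumes "is_tree N E" "u \<in> N"
  shows "edge_component E u v \<subseteq> N"
proof
  fix z assume "z \<in> edge_component E u v"
  then have "(u, z) \<in> (adj (E - {{u, v}}))\<^sup>*" by (simp add: edge_component_def)
  then show "z \<in> N"
    by (rule adj_rtrancl_closed[OF _ assms(2)]) (use is_tree_edgeD[OF assms(1)] in blast)
qed

lemma edge_component_not_other_end:
  "is_tree N E \<Longrightarrow> {u, v} \<in> E \<Longrightarrow> v \<notin> edge_component E u v"
  unfolding edge_component_def using is_tree_bridge by blast

lemma reachable_via_neighbour:
  assumes "(u, z) \<in> (adj E)\<^sup>*"
  shows "z = u \<or> (\<exists>w. {u, w} \<in> E \<and> z \<in> edge_component E w u)"
  using assms
proof (induction rule: rtrancl_induct)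
  case (step y z)
  have yz: "{y, z} \<in> E" using step.hyps(2) by (simp add: adj_def)
  from step.IH show ?case
  proof
    assume "y = u"
    then show ?case using yz by auto
  next
    assume "\<exists>w. {u, w} \<in> E \<and> y \<in> edge_component E w u"
    then obtain w where "{u, w} \<in> E" "y \<in> edge_component E w u" by blast
    then show ?case using edge_component_step[OF _ yz] by fastforce
  qed
qed simp

lemma edge_component_nested:
  assumes "is_tree N E" "{u, a} \<in> E" "{u, a} \<noteq> {u, v}"
  shows "edge_component E a u \<subseteq> edge_component E u v"
proof
  fix z assume "z \<in> edge_component E a u"
  then have "(a, z) \<in> (adj (E - {{a, u}}))\<^sup>*" by (simp add: edge_component_def)
  moreover have "(a, u) \<notin> (adj (E - {{a, u}}))\<^sup>*"
    using is_tree_bridge[OF assms(1)] assms(2) by (simp add: insert_commute)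
  ultimately have "(a, z) \<in> (adj (E - {{a, u}} - {{u, v}}))\<^sup>*"
    by (rule adj_rtrancl_Diff_unreachable) simp
  then have "(a, z) \<in> (adj (E - {{u, v}}))\<^sup>*" using adj_rtrancl_mono[of "E - {{a, u}} - {{u, v}}"] by blast
  moreover have "(u, a) \<in> adj (E - {{u, v}})" using assms(2,3) by (simp add: adj_def)
  ultimately show "z \<in> edge_component E u v"
    by (simp add: edge_component_def converse_rtrancl_into_rtrancl)
qed

lemma edge_component_psubset:
  assumes "is_tree N E" "{u, a} \<in> E" "{u, a} \<noteq> {u, v}"
  shows "edge_component E a u \<subset> edge_component E u v"
proof -
  have "{a, u} \<in> E" using assms(2) by (simp add: insert_commute)
  then have "u \<notin> edge_component E a u" by (rule edge_component_not_other_end[OF assms(1)])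
  then show ?thesis using edge_component_nested[OF assms] edge_component_self[of u E v] by blast
qed

lemma edge_component_disjoint:
  assumes "is_tree N E" "{u, v} \<in> E"
  shows "edge_component E u v \<inter> edge_component E v u = {}"
proof -
  have "(u, z) \<notin> (adj (E - {{u, v}}))\<^sup>* \<or> (v, z) \<notin> (adj (E - {{u, v}}))\<^sup>*" for z
    using is_tree_bridge[OF assms] adj_rtrancl_sym rtrancl_trans by metis
  moreover have "{v, u} = {u, v}" by (rule insert_commute)
  ultimately show ?thesis unfolding edge_component_def by auto
qed

lemma edge_component_cover:
  assumes "is_tree N E" "{u, v} \<in> E" "z \<in> N"
  shows "z \<in> edge_component E u v \<union> edge_component E v u"
proof -
  have "(u, z) \<in> (adj E)\<^sup>*"
    using is_tree_connected[OF assms(1) _ assms(3)] is_tree_edgeD[OF assms(1,2)] by blast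
  then consider "z = u" | w where "{u, w} \<in> E" "z \<in> edge_component E w u"
    using reachable_via_neighbour by blast
  then show ?thesis
  proof cases
    case 2
    then show ?thesis using edge_component_nested[OF assms(1) 2(1), of v]
      by (cases "w = v") (auto simp: doubleton_eq_iff)
  qed simp
qed

lemma edge_side_subset: "edge_side V E L u v \<subseteq> V"
  by (auto simp: edge_side_def)

lemma leaf_label_in_nodes: "bij_betw L V (leaves N E) \<Longrightarrow> x \<in> V \<Longrightarrow> L x \<in> N"
  by (auto simp: bij_betw_def leaves_def)

lemma edge_side_swap:
  assumes "is_tree N E" "bij_betw L V (leaves N E)" "{u, v} \<in> E"
  shows "edge_side V E L v u = V - edge_side V E L u v"
  using edge_component_cover[OF assms(1,3)] edge_component_disjoint[OF assms(1,3)]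
    leaf_label_in_nodes[OF assms(2)]
  unfolding edge_side_eq by blast

lemma edge_side_le_bd_width:
  assumes "is_tree N E" "{u, v} \<in> E"
  shows "f (edge_side V E L u v) \<le> bd_width V f E L"
proof -
  have "{f (edge_side V E L u v) | u v. {u, v} \<in> E} \<subseteq> (\<lambda>(u, v). f (edge_side V E L u v)) ` (N \<times> N)"
    using is_tree_edgeD[OF assms(1)] by fastforce
  then have "finite ({f (edge_side V E L u v) | u v. {u, v} \<in> E} \<union> {0})"
    using is_tree_finite[OF assms(1)] by (simp add: finite_subset)
  then show ?thesis unfolding bd_width_def using assms(2) by (blast intro: Max_ge)
qed

lemma degree_oneD:
  assumes "degree E w = 1" "{w, v} \<in> E"
  shows "{e \<in> E. w \<in> e} = {{w, v}}"
proof -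
  obtain e where "{e \<in> E. w \<in> e} = {e}"
    using assms(1) unfolding degree_def by (rule card_1_singletonE)
  moreover have "{w, v} \<in> {e \<in> E. w \<in> e}" using assms(2) by simp
  ultimately show ?thesis by simp
qed

lemma edge_side_leaf:
  assumes "bij_betw L V (leaves N E)" "x \<in> V" "{L x, v} \<in> E"
  shows "edge_side V E L (L x) v = {x}"
proof -
  have "degree E (L x) = 1" using bij_betw_apply[OF assms(1,2)] by (simp add: leaves_def)
  then have only: "{e \<in> E. L x \<in> e} = {{L x, v}}" using assms(3) by (rule degree_oneD)
  have "z = L x" if "(L x, z) \<in> (adj (E - {{L x, v}}))\<^sup>*" for z
    using that
  proof (cases rule: converse_rtranclE)
    case (step y)
    then have "{L x, y} \<in> {e \<in> E. L x \<in> e} - {{L x, v}}" by (simp add: adj_def)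
    then show ?thesis unfolding only by simp
  qed simp
  moreover have "inj_on L V" using assms(1) by (simp add: bij_betw_def)
  ultimately show ?thesis using assms(2) unfolding edge_side_def by (auto dest: inj_onD)
qed

lemma leaf_pendant_edge:
  assumes "is_tree N E" "bij_betw L V (leaves N E)" "x \<in> V"
  obtains v where "{L x, v} \<in> E" "edge_side V E L (L x) v = {x}"
proof -
  have "degree E (L x) = 1" using bij_betw_apply[OF assms(2,3)] by (simp add: leaves_def)
  then obtain e where "{e' \<in> E. L x \<in> e'} = {e}" unfolding degree_def by (rule card_1_singletonE)
  then have "e \<in> E" "L x \<in> e" by auto
  then obtain v where "e = {L x, v}" by (rule is_tree_edge_at[OF assms(1)])
  with \<open>e \<in> E\<close> have "{L x, v} \<in> E" by simp
  moreover from this have "edge_side V E L (L x) v = {x}" by (rule edge_side_leaf[OF assms(2,3)])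
  ultimately show thesis by (rule that)
qed

lemma degree_three_neighbours:
  assumes "is_tree N E" "degree E u = 3" "{u, v} \<in> E"
  obtains a b where "{e \<in> E. u \<in> e} = {{u, v}, {u, a}, {u, b}}"
    and "{u, a} \<noteq> {u, v}" "{u, b} \<noteq> {u, v}" "{u, a} \<noteq> {u, b}"
proof -
  let ?I = "{e \<in> E. u \<in> e}"
  have uv: "{u, v} \<in> ?I" using assms(3) by simp
  then have "card (?I - {{u, v}}) = 2" using assms(2) by (simp add: degree_def card_Diff_singleton)
  then obtain e1 e2 where e12: "?I - {{u, v}} = {e1, e2}" "e1 \<noteq> e2" by (meson card_2_iff)
  then have e1: "e1 \<in> E" "u \<in> e1" "e1 \<noteq> {u, v}" and e2: "e2 \<in> E" "u \<in> e2" "e2 \<noteq> {u, v}"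
    by blast+
  obtain a where a: "e1 = {u, a}" using is_tree_edge_at[OF assms(1) e1(1,2)] .
  obtain b where b: "e2 = {u, b}" using is_tree_edge_at[OF assms(1) e2(1,2)] .
  have "?I = insert {u, v} (?I - {{u, v}})" using uv by (rule insert_Diff[symmetric])
  then have "?I = {{u, v}, e1, e2}" unfolding e12(1) .
  then show thesis using e1(3) e2(3) e12(2) unfolding a b by (rule that)
qed

definition is_tripartition :: "'a set \<Rightarrow> 'a set \<Rightarrow> 'a set \<Rightarrow> 'a set \<Rightarrow> bool" where
  "is_tripartition V C1 C2 C3 \<longleftrightarrow>
     C1 \<union> C2 \<union> C3 = V \<and> C1 \<inter> C2 = {} \<and> C1 \<inter> C3 = {} \<and> C2 \<inter> C3 = {}"

lemma edge_sides_tripartition_at_degree_three: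
  assumes tree: "is_tree N E" and bij: "bij_betw L V (leaves N E)"
    and inc: "{e \<in> E. u \<in> e} = {{u, v}, {u, a}, {u, b}}"
    and ne: "{u, a} \<noteq> {u, v}" "{u, b} \<noteq> {u, v}" "{u, a} \<noteq> {u, b}"
  shows "is_tripartition V (edge_side V E L a u) (edge_side V E L b u) (edge_side V E L v u)"
proof -
  have edges: "{u, v} \<in> E" "{u, a} \<in> E" "{u, b} \<in> E" using inc by blast+
  have "edge_component E a u \<subseteq> edge_component E u v" "edge_component E b u \<subseteq> edge_component E u v"
    using edge_component_nested[OF tree] edges ne by blast+
  moreover have "edge_component E a u \<subseteq> edge_component E u b"
    using edge_component_nested[OF tree edges(2) ne(3)] .
  moreover have "edge_component E u v \<inter> edge_component E v u = {}"
    "edge_component E u b \<inter> edge_component E b u = {}"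
    using edge_component_disjoint[OF tree] edges by blast+
  moreover have "L x \<in> edge_component E v u \<union> edge_component E a u \<union> edge_component E b u"
    if "x \<in> V" for x
  proof -
    have "degree E u = 3" using ne unfolding degree_def inc by (simp add: card_insert_if)
    moreover have "degree E (L x) = 1" using bij_betw_apply[OF bij that] by (simp add: leaves_def)
    moreover have "(u, L x) \<in> (adj E)\<^sup>*"
      using is_tree_connected[OF tree] is_tree_edgeD[OF tree edges(1)] leaf_label_in_nodes[OF bij that]
      by blast
    ultimately obtain w where "{u, w} \<in> E" "L x \<in> edge_component E w u"
      using reachable_via_neighbour by force
    moreover from \<open>{u, w} \<in> E\<close> have "{u, w} \<in> {{u, v}, {u, a}, {u, b}}" unfolding inc[symmetric] by blast
    ultimately show ?thesis by (auto simp: doubleton_eq_iff)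
  qed
  ultimately show ?thesis unfolding is_tripartition_def edge_side_eq by blast
qed

lemma ex_has_least_nat_2:
  fixes m :: "'a \<Rightarrow> 'b \<Rightarrow> nat"
  assumes "R u v"
  shows "\<exists>u v. R u v \<and> (\<forall>u' v'. R u' v' \<longrightarrow> m u v \<le> m u' v')"
  using ex_has_least_nat[of "\<lambda>p. R (fst p) (snd p)" "(u, v)" "\<lambda>p. m (fst p) (snd p)"] assms
  by (metis fst_conv snd_conv)

lemma branch_decomposition_tripartition:
  assumes bd: "branch_decomposition V N E L" and "V \<noteq> {}"
    and oriented: "\<And>u v. {u, v} \<in> E \<Longrightarrow> P (edge_side V E L u v) \<or> P (edge_side V E L v u)"
    and singleton: "\<And>x. x \<in> V \<Longrightarrow> P {x}"
    and empty: "P {}"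
  shows "\<exists>C1 C2 C3. is_tripartition V C1 C2 C3 \<and> P C1 \<and> P C2 \<and> P C3"
proof -
  have tree: "is_tree N E" and deg: "\<forall>w\<in>N. degree E w = 1 \<or> degree E w = 3"
    and bij: "bij_betw L V (leaves N E)"
    using bd by (auto simp: branch_decomposition_def)
  show ?thesis
  proof (cases "\<forall>u v. {u, v} \<in> E \<longrightarrow> P (edge_side V E L u v)")
    case True
    obtain x where "x \<in> V" using \<open>V \<noteq> {}\<close> by blast
    then obtain v where e: "{L x, v} \<in> E" by (rule leaf_pendant_edge[OF tree bij])
    then have "{v, L x} \<in> E" by (simp add: insert_commute)
    then have "is_tripartition V (edge_side V E L (L x) v) (edge_side V E L v (L x)) {}
      \<and> P (edge_side V E L (L x) v) \<and> P (edge_side V E L v (L x)) \<and> P {}"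
      using True e edge_side_swap[OF tree bij e] edge_side_subset[of V E L "L x" v] empty
      unfolding is_tripartition_def by blast
    then show ?thesis by blast
  next
    case False
    then obtain u v where uv: "{u, v} \<in> E" and bad: "\<not> P (edge_side V E L u v)"
      and minimal: "\<And>u' v'. {u', v'} \<in> E \<Longrightarrow> \<not> P (edge_side V E L u' v') \<Longrightarrow>
        card (edge_component E u v) \<le> card (edge_component E u' v')"
      using ex_has_least_nat_2[of "\<lambda>u v. {u, v} \<in> E \<and> \<not> P (edge_side V E L u v)" _ _
          "\<lambda>u v. card (edge_component E u v)"]
      by blast
    have uN: "u \<in> N" using is_tree_edgeD[OF tree uv] by blast
    have "degree E u \<noteq> 1"
    proof
      assume "degree E u = 1"
      with uN have "u \<in> L ` V" using bij_betw_imp_surj_on[OF bij] by (simp add: leaves_def)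
      then obtain x where "x \<in> V" "u = L x" by blast
      then show False using bad singleton edge_side_leaf[OF bij] uv by auto
    qed
    then obtain a b where inc: "{e \<in> E. u \<in> e} = {{u, v}, {u, a}, {u, b}}"
      and ne: "{u, a} \<noteq> {u, v}" "{u, b} \<noteq> {u, v}" "{u, a} \<noteq> {u, b}"
      using degree_three_neighbours[OF tree _ uv] deg uN by blast
    have finite_component: "finite (edge_component E u v)"
      using edge_component_subset[OF tree uN] is_tree_finite[OF tree] by (rule finite_subset)
    have good: "P (edge_side V E L c u)" if "{u, c} \<in> E" "{u, c} \<noteq> {u, v}" for c
    proof (rule ccontr)
      assume "\<not> P (edge_side V E L c u)"
      with that(1) have "card (edge_component E u v) \<le> card (edge_component E c u)"
        by (intro minimal) (simp_all add: insert_commute)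
      moreover have "card (edge_component E c u) < card (edge_component E u v)"
        using psubset_card_mono[OF finite_component edge_component_psubset[OF tree that]] .
      ultimately show False by simp
    qed
    have "{u, a} \<in> {e \<in> E. u \<in> e}" "{u, b} \<in> {e \<in> E. u \<in> e}" unfolding inc by simp_all
    then have "P (edge_side V E L a u)" "P (edge_side V E L b u)" using good ne by simp_all
    moreover have "P (edge_side V E L v u)" using oriented[OF uv] bad by blast
    moreover have "is_tripartition V (edge_side V E L a u) (edge_side V E L b u) (edge_side V E L v u)"
      using edge_sides_tripartition_at_degree_three[OF tree bij inc ne] .
    ultimately show ?thesis by blast
  qed
qed

section \<open>Connectivity functions\<close>

lemma connectivity_function_empty: "connectivity_function V f \<Longrightarrow> f {} = 0"
  unfolding connectivity_function_def by blast

lemma connectivity_function_compl: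
  assumes "connectivity_function V f" "X \<subseteq> V"
  shows "f (V - X) = f X"
proof -
  have "\<forall>X. X \<subseteq> V \<longrightarrow> f X = f (V - X)" using assms(1) unfolding connectivity_function_def by blast
  then have "f X = f (V - X)" using assms(2) by blast
  then show ?thesis by (rule sym)
qed

lemma connectivity_function_submodular:
  "connectivity_function V f \<Longrightarrow> X \<subseteq> V \<Longrightarrow> Y \<subseteq> V \<Longrightarrow> f (X \<union> Y) + f (X \<inter> Y) \<le> f X + f Y"
  unfolding connectivity_function_def by blast

lemma connectivity_function_union_le:
  "connectivity_function V f \<Longrightarrow> X \<subseteq> V \<Longrightarrow> Y \<subseteq> V \<Longrightarrow> f (X \<union> Y) \<le> f X + f Y"
  using connectivity_function_submodular[of V f X Y] by linarith

lemma connectivity_function_whole: "connectivity_function V f \<Longrightarrow> f V = 0"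
  using connectivity_function_compl[of V f "{}"] connectivity_function_empty[of V f] by simp

lemma connectivity_function_card_le_1:
  assumes "connectivity_function V f" "finite V" "card V \<le> 1" "W \<subseteq> V"
  shows "f W = 0"
proof -
  have "\<forall>x \<in> V. \<forall>y \<in> V. x = y" using assms(2,3) card_le_Suc0_iff_eq by auto
  with assms(4) have "W = {} \<or> W = V" by (metis equals0I subsetD subset_antisym subsetI)
  then show ?thesis
    using connectivity_function_empty[OF assms(1)] connectivity_function_whole[OF assms(1)] by blast
qed

text \<open>If \<open>f (A \<inter> W) \<ge> f W\<close>, submodularity applied to \<open>A\<close> and \<open>W\<close> gives
  \<open>f ((V - A) - W) \<le> f A\<close>, and subadditivity then gives \<open>f ((V - A) \<inter> W) \<le> 2 f A < f W\<close>;
  symmetrically if \<open>f (A - W) \<ge> f W\<close>.\<close>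
lemma small_separation_side_bounded:
  assumes cf: "connectivity_function V f" and "A \<subseteq> V" "W \<subseteq> V" and small: "2 * f A < f W"
  shows "(f (A \<inter> W) < f W \<and> f (A \<inter> (V - W)) < f W) \<or>
         (f ((V - A) \<inter> W) < f W \<and> f ((V - A) \<inter> (V - W)) < f W)"
proof -
  note compl = connectivity_function_compl[OF cf]
  have "f (A \<inter> W) + f ((V - A) \<inter> (V - W)) \<le> f A + f W"
  proof -
    have "f ((V - A) \<inter> (V - W)) = f (V - (A \<union> W))" by (rule arg_cong[where f = f]) blast
    also have "\<dots> = f (A \<union> W)" by (rule compl) (use assms(2,3) in blast)
    finally show ?thesis using connectivity_function_submodular[OF cf assms(2,3)] by linarith
  qed
  moreover have "f ((V - A) \<inter> W) + f (A \<inter> (V - W)) \<le> f A + f W"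
  proof -
    have "f (A \<inter> (V - W)) = f (V - ((V - A) \<union> W))" by (rule arg_cong[where f = f]) (use assms(2) in blast)
    also have "\<dots> = f ((V - A) \<union> W)" by (rule compl) (use assms(3) in blast)
    finally show ?thesis
      using connectivity_function_submodular[OF cf Diff_subset[of V A] assms(3)] compl[OF assms(2)] by linarith
  qed
  moreover have "f ((V - A) \<inter> W) \<le> f A + f ((V - A) \<inter> (V - W))"
  proof -
    have "f ((V - A) \<inter> W) = f (V - (A \<union> (V - A) \<inter> (V - W)))" by (rule arg_cong[where f = f]) blast
    also have "\<dots> = f (A \<union> (V - A) \<inter> (V - W))" by (rule compl) (use assms(2) in blast)
    also have "\<dots> \<le> f A + f ((V - A) \<inter> (V - W))"
      by (rule connectivity_function_union_le[OF cf assms(2)]) blast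
    finally show ?thesis .
  qed
  moreover have "f ((V - A) \<inter> (V - W)) \<le> f A + f ((V - A) \<inter> W)"
  proof -
    have "f ((V - A) \<inter> (V - W)) = f (V - (A \<union> (V - A) \<inter> W))" by (rule arg_cong[where f = f]) blast
    also have "\<dots> = f (A \<union> (V - A) \<inter> W)" by (rule compl) (use assms(2) in blast)
    also have "\<dots> \<le> f A + f ((V - A) \<inter> W)"
      by (rule connectivity_function_union_le[OF cf assms(2)]) blast
    finally show ?thesis .
  qed
  ultimately show ?thesis using small by linarith
qed

lemma tripartition_of_narrow_branch_decomposition:
  assumes cf: "connectivity_function V f" and "W \<subseteq> V"
    and bd: "branch_decomposition V N E L" and "V \<noteq> {}"
    and narrow: "2 * bd_width V f E L < f W"
  shows "\<exists>C1 C2 C3. is_tripartition V C1 C2 C3 \<and>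
    (\<forall>C \<in> {C1, C2, C3}. 2 * f C < f W \<and> f (C \<inter> W) < f W \<and> f (C \<inter> (V - W)) < f W)"
proof -
  have tree: "is_tree N E" and bij: "bij_betw L V (leaves N E)"
    using bd by (simp_all add: branch_decomposition_def)
  have small: "2 * f (edge_side V E L u v) < f W" if "{u, v} \<in> E" for u v
    using edge_side_le_bd_width[OF tree that, of f V L] narrow by linarith
  let ?P = "\<lambda>C. 2 * f C < f W \<and> f (C \<inter> W) < f W \<and> f (C \<inter> (V - W)) < f W"
  have "\<exists>C1 C2 C3. is_tripartition V C1 C2 C3 \<and> ?P C1 \<and> ?P C2 \<and> ?P C3"
  proof (rule branch_decomposition_tripartition[OF bd \<open>V \<noteq> {}\<close>])
    show "?P (edge_side V E L u v) \<or> ?P (edge_side V E L v u)" if "{u, v} \<in> E" for u v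
    proof -
      have "{v, u} \<in> E" using that by (simp add: insert_commute)
      then show ?thesis
        using small_separation_side_bounded[OF cf edge_side_subset \<open>W \<subseteq> V\<close> small[OF that]]
          small[OF that] small[OF \<open>{v, u} \<in> E\<close>]
        unfolding edge_side_swap[OF tree bij that] by blast
    qed
    show "?P {x}" if x: "x \<in> V" for x
    proof -
      obtain v where "{L x, v} \<in> E" "edge_side V E L (L x) v = {x}"
        by (rule leaf_pendant_edge[OF tree bij x])
      then have "2 * f {x} < f W" using small by metis
      then show ?thesis using connectivity_function_empty[OF cf] x by (cases "x \<in> W") auto
    qed
    show "?P {}" using connectivity_function_empty[OF cf] narrow by simp
  qed
  then show ?thesis by auto
qed

section \<open>Existence of branch decompositions\<close>

text \<open>The caterpillar with spine \<open>0, 2, \<dots>, 2m\<close> and a pendant leaf \<open>2i + 1\<close> at every inner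
  spine node \<open>2i\<close>; its leaves are \<open>0\<close>, \<open>2m\<close> and the \<open>m - 1\<close> pendant nodes.\<close>
definition caterpillar_edge :: "nat \<Rightarrow> nat \<Rightarrow> nat \<Rightarrow> bool" where
  "caterpillar_edge m x y \<longleftrightarrow> even x \<and> x + 2 \<le> 2 * m \<and> (y = x + 2 \<or> y = x + 1 \<and> 2 \<le> x)"

definition caterpillar :: "nat \<Rightarrow> nat set set" where
  "caterpillar m = {{x, y} | x y. caterpillar_edge m x y}"

lemma mem_caterpillar: "e \<in> caterpillar m \<longleftrightarrow> (\<exists>x y. e = {x, y} \<and> caterpillar_edge m x y)"
  unfolding caterpillar_def by blast

lemma caterpillar_edge_nodes:
  "caterpillar_edge m x y \<Longrightarrow> x \<in> {..2 * m} - {1} \<and> y \<in> {..2 * m} - {1} \<and> x \<noteq> y"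
  unfolding caterpillar_edge_def by auto

text \<open>Deleting a spine edge \<open>{x, x + 2}\<close> separates the nodes up to \<open>x + 1\<close> from the rest;
  deleting a pendant edge isolates its leaf.\<close>
lemma caterpillar_bridge:
  assumes "caterpillar_edge m x y"
  shows "(x, y) \<notin> (adj (caterpillar m - {{x, y}}))\<^sup>*"
proof -
  obtain S where "x \<in> S" "y \<notin> S"
    and sep: "\<And>x' y'. caterpillar_edge m x' y' \<Longrightarrow> x' \<noteq> x \<or> y' \<noteq> y \<Longrightarrow> x' \<in> S \<longleftrightarrow> y' \<in> S"
  proof (cases "y = x + 2")
    case True
    show thesis
    proof (rule that[of "{z. z \<le> x + 1}"])
      show "x' \<in> {z. z \<le> x + 1} \<longleftrightarrow> y' \<in> {z. z \<le> x + 1}"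
        if "caterpillar_edge m x' y'" "x' \<noteq> x \<or> y' \<noteq> y" for x' y'
        using assms that True unfolding caterpillar_edge_def mem_Collect_eq by presburger
    qed (use True in simp_all)
  next
    case False
    show thesis
    proof (rule that[of "{z. z \<noteq> y}"])
      show "x' \<in> {z. z \<noteq> y} \<longleftrightarrow> y' \<in> {z. z \<noteq> y}"
        if "caterpillar_edge m x' y'" "x' \<noteq> x \<or> y' \<noteq> y" for x' y'
        using assms that False unfolding caterpillar_edge_def mem_Collect_eq by presburger
    qed (use assms in \<open>auto simp: caterpillar_edge_def\<close>)
  qed
  show ?thesis
  proof (rule adj_rtrancl_separated)
    show "p \<in> S \<longleftrightarrow> q \<in> S" if "{p, q} \<in> caterpillar m - {{x, y}}" for p q
    proof -
      have "{p, q} \<in> caterpillar m" using that by blast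
      then obtain x' y' where e: "{p, q} = {x', y'}" "caterpillar_edge m x' y'"
        unfolding mem_caterpillar by blast
      with that have "x' \<noteq> x \<or> y' \<noteq> y" by blast
      with e(2) have "x' \<in> S \<longleftrightarrow> y' \<in> S" by (rule sep)
      moreover have "p = x' \<and> q = y' \<or> p = y' \<and> q = x'" using e(1) by (simp add: doubleton_eq_iff)
      ultimately show ?thesis by blast
    qed
  qed fact+
qed

lemma caterpillar_edge_adj: "caterpillar_edge m x y \<Longrightarrow> (x, y) \<in> adj (caterpillar m)"
  unfolding adj_def mem_caterpillar by blast

lemma caterpillar_spine_connected: "2 * i \<le> 2 * m \<Longrightarrow> (0, 2 * i) \<in> (adj (caterpillar m))\<^sup>*"
proof (induction i)
  case (Suc i)
  then have "caterpillar_edge m (2 * i) (2 * Suc i)" by (simp add: caterpillar_edge_def)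
  with Suc show ?case by (auto intro: rtrancl_into_rtrancl caterpillar_edge_adj)
qed simp

lemma caterpillar_connected:
  assumes "v \<in> {..2 * m} - {1}"
  shows "(0, v) \<in> (adj (caterpillar m))\<^sup>*"
proof (cases "even v")
  case True
  then show ?thesis using assms caterpillar_spine_connected[of "v div 2" m] by simp
next
  case False
  then have "caterpillar_edge m (v - 1) v" using assms by (auto simp: caterpillar_edge_def) presburger+
  moreover have "(0, v - 1) \<in> (adj (caterpillar m))\<^sup>*"
    using False assms caterpillar_spine_connected[of "v div 2" m] by (auto elim!: oddE)
  ultimately show ?thesis by (auto intro: rtrancl_into_rtrancl caterpillar_edge_adj)
qed

lemma is_tree_caterpillar: "is_tree ({..2 * m} - {1}) (caterpillar m)"
  unfolding is_tree_def
proof (intro conjI ballI allI impI)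
  show "finite ({..2 * m} - {1})" "{..2 * m} - {1} \<noteq> {}" by auto
next
  fix e assume "e \<in> caterpillar m"
  then show "\<exists>u v. e = {u, v} \<and> u \<noteq> v \<and> u \<in> {..2 * m} - {1} \<and> v \<in> {..2 * m} - {1}"
    unfolding mem_caterpillar using caterpillar_edge_nodes by blast
next
  fix u v assume "u \<in> {..2 * m} - {1}" "v \<in> {..2 * m} - {1}"
  then show "(u, v) \<in> (adj (caterpillar m))\<^sup>*"
    using caterpillar_connected adj_rtrancl_sym rtrancl_trans by metis
next
  fix u v assume "{u, v} \<in> caterpillar m"
  then obtain x y where "{u, v} = {x, y}" "caterpillar_edge m x y" unfolding mem_caterpillar by blast
  then show "(u, v) \<notin> (adj (caterpillar m - {{u, v}}))\<^sup>*"
    using caterpillar_bridge adj_rtrancl_sym by (metis doubleton_eq_iff)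
qed

lemma degree_caterpillar:
  "degree (caterpillar m) v = card {w. caterpillar_edge m v w \<or> caterpillar_edge m w v}"
proof -
  have "{e \<in> caterpillar m. v \<in> e} = (\<lambda>w. {v, w}) ` {w. caterpillar_edge m v w \<or> caterpillar_edge m w v}"
    unfolding mem_caterpillar by (auto simp: insert_commute)
  moreover have "inj_on (\<lambda>w. {v, w}) {w. caterpillar_edge m v w \<or> caterpillar_edge m w v}"
    using caterpillar_edge_nodes by (auto intro!: inj_onI simp: doubleton_eq_iff)
  ultimately show ?thesis unfolding degree_def by (simp add: card_image)
qed

lemma degree_caterpillar_eq:
  assumes "1 \<le> m" "v \<in> {..2 * m} - {1}"
  shows "degree (caterpillar m) v = (if v = 0 \<or> v = 2 * m \<or> odd v then 1 else 3)"
proof -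
  have "{w. caterpillar_edge m v w \<or> caterpillar_edge m w v} =
    (if v = 0 then {2} else if v = 2 * m then {v - 2} else if odd v then {v - 1} else {v - 2, v + 1, v + 2})"
    using assms unfolding caterpillar_edge_def by (auto; presburger)
  then show ?thesis using assms unfolding degree_caterpillar by (auto simp: card_insert_if)
qed

lemma leaves_caterpillar:
  assumes "1 \<le> m"
  shows "leaves ({..2 * m} - {1}) (caterpillar m) = {0, 2 * m} \<union> {v. odd v \<and> 3 \<le> v \<and> v < 2 * m}"
proof (rule set_eqI)
  fix v
  show "v \<in> leaves ({..2 * m} - {1}) (caterpillar m) \<longleftrightarrow> v \<in> {0, 2 * m} \<union> {v. odd v \<and> 3 \<le> v \<and> v < 2 * m}"
    using degree_caterpillar_eq[OF assms, of v] assms unfolding leaves_def by auto presburger+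
qed

lemma bij_betw_caterpillar_leaves:
  assumes "1 \<le> m"
  shows "bij_betw (\<lambda>j. if j = 0 \<or> j = m then 2 * j else 2 * j + 1) {0..<m + 1}
    (leaves ({..2 * m} - {1}) (caterpillar m))"
  unfolding leaves_caterpillar[OF assms]
  by (rule bij_betw_byWitness[where f' = "\<lambda>v. v div 2"]) (auto elim!: oddE)

lemma branch_decomposition_exists:
  assumes "finite V" "2 \<le> card V"
  shows "\<exists>N E L. branch_decomposition V N E L"
proof -
  define m where "m = card V - 1"
  have "1 \<le> m" "card V = m + 1" using assms(2) unfolding m_def by auto
  obtain g where "bij_betw g V {0..<m + 1}"
    using ex_bij_betw_finite_nat[OF assms(1)] \<open>card V = m + 1\<close> by auto
  then have "bij_betw ((\<lambda>j. if j = 0 \<or> j = m then 2 * j else 2 * j + 1) \<circ> g) V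
      (leaves ({..2 * m} - {1}) (caterpillar m))"
    using bij_betw_caterpillar_leaves[OF \<open>1 \<le> m\<close>] by (rule bij_betw_trans)
  moreover have "\<forall>v \<in> {..2 * m} - {1}. degree (caterpillar m) v = 1 \<or> degree (caterpillar m) v = 3"
    using degree_caterpillar_eq[OF \<open>1 \<le> m\<close>] by simp
  ultimately show ?thesis unfolding branch_decomposition_def using is_tree_caterpillar by blast
qed

lemma bw_attained:
  assumes "finite V" "2 \<le> card V"
  obtains N E L where "branch_decomposition V N E L" "bd_width V f E L = bw V f"
proof -
  have "\<exists>k. \<exists>N E L. branch_decomposition V N E L \<and> bd_width V f E L = k"
    using branch_decomposition_exists[OF assms] by blast
  then have "\<exists>N E L. branch_decomposition V N E L \<and> bd_width V f E L =
      (LEAST k. \<exists>N E L. branch_decomposition V N E L \<and> bd_width V f E L = k)"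
    by (rule LeastI_ex)
  with that show thesis unfolding bw_def using assms(2) by auto
qed

theorem theorem3:
  fixes V :: "'a set" and f :: "'a set \<Rightarrow> nat" and W :: "'a set"
  assumes "finite V"
    and "connectivity_function V f"
    and "W \<subseteq> V"
    and "f W > 2 * bw V f"
  shows "\<exists>C1 C2 C3. C1 \<union> C2 \<union> C3 = V \<and>
           C1 \<inter> C2 = {} \<and> C1 \<inter> C3 = {} \<and> C2 \<inter> C3 = {} \<and>
           (\<forall>C \<in> {C1, C2, C3}.
              2 * f C < f W \<and>
              f (C \<inter> W) < f W \<and>
              f (C \<inter> (V - W)) < f W)"
proof (cases "2 \<le> card V")
  case False
  then have "f W = 0" using connectivity_function_card_le_1[OF assms(2,1) _ assms(3)] by simp
  with assms(4) show ?thesis by simp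
next
  case True
  obtain N E L where "branch_decomposition V N E L" "bd_width V f E L = bw V f"
    using bw_attained[OF assms(1) True] .
  with assms True have "\<exists>C1 C2 C3. is_tripartition V C1 C2 C3 \<and>
      (\<forall>C \<in> {C1, C2, C3}. 2 * f C < f W \<and> f (C \<inter> W) < f W \<and> f (C \<inter> (V - W)) < f W)"
    by (intro tripartition_of_narrow_branch_decomposition) auto
  then show ?thesis unfolding is_tripartition_def by auto
qed

end
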